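(* Let $T$ be a tree on $n\ge3$ vertices and $k\ge2$ even. Then the order-$k$ Steiner distance hypermatrix $M$ of $T$ is conditionally strictly negative definite, i.e., $M(\mathbf{c},\ldots,\mathbf{c})<0$ for every nonzero $\mathbf{c}\in\mathbb{R}^n$ with $\sum_{i=1}^n c_i=0$.
   Context: $T$ is a tree with vertex set $\{1,\dots,n\}$. For $U\subseteq V(T)$, the Steiner distance $S(U)$ is the minimum number of edges of a connected subgraph of $T$ whose vertex set contains $U$. The order-$k$ Steiner distance hypermatrix $M$ has entries $M_{(i_1,\dots,i_k)}=S(\{i_1,\dots,i_k\})$, and $M(\mathbf{x}_1,\dots,\mathbf{x}_k)=\sum_{\mathbf{i}\in V(T)^k}M_{\mathbf{i}}\prod_{j=1}^k x_{j i_j}$. *)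

theory Defs
  imports Complex_Main "HOL-Library.FuncSet"
begin

definition adj_rel :: "nat set set \<Rightarrow> (nat \<times> nat) set" where
  "adj_rel E = {(x, y). {x, y} \<in> E}"

definition graph_connected :: "nat set \<Rightarrow> nat set set \<Rightarrow> bool" where
  "graph_connected V E \<longleftrightarrow> (\<forall>x\<in>V. \<forall>y\<in>V. (x, y) \<in> (adj_rel E)\<^sup>*)"

definition simple_graph_on :: "nat set \<Rightarrow> nat set set \<Rightarrow> bool" where
  "simple_graph_on V E \<longleftrightarrow> (\<forall>e\<in>E. \<exists>a b. a \<noteq> b \<and> a \<in> V \<and> b \<in> V \<and> e = {a, b})"

definition acyclic_graph :: "nat set set \<Rightarrow> bool" where
  "acyclic_graph E \<longleftrightarrow> (\<forall>a b. {a, b} \<in> E \<longrightarrow> (a, b) \<notin> (adj_rel (E - {{a, b}}))\<^sup>*)"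

definition is_tree :: "nat \<Rightarrow> nat set set \<Rightarrow> bool" where
  "is_tree n E \<longleftrightarrow> simple_graph_on {1..n} E \<and> graph_connected {1..n} E \<and> acyclic_graph E"

definition steiner_dist :: "nat \<Rightarrow> nat set set \<Rightarrow> nat set \<Rightarrow> nat" where
  "steiner_dist n E U = (LEAST m. \<exists>V' E'. V' \<subseteq> {1..n} \<and> E' \<subseteq> E \<and>
       (\<forall>e\<in>E'. e \<subseteq> V') \<and> U \<subseteq> V' \<and> graph_connected V' E' \<and> card E' = m)"

text \<open>The k-linear form of the order-k Steiner distance hypermatrix:
  M(x_1,...,x_k) = sum over i in V(T)^k of S({i_1..i_k}) * prod_j x_j(i_j).
  Slots are indexed 0..k-1; vectors are functions on {1..n}.\<close>
definition steiner_form :: "nat \<Rightarrow> nat set set \<Rightarrow> nat \<Rightarrow> (nat \<Rightarrow> nat \<Rightarrow> real) \<Rightarrow> real" where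
  "steiner_form n E k x = (\<Sum>i\<in>{0..<k} \<rightarrow>\<^sub>E {1..n}.
       real (steiner_dist n E (i ` {0..<k})) * (\<Prod>j<k. x j (i j)))"

end

theory Submission
  imports Defs
begin

text \<open>In a tree, the Steiner distance S(U) is the number of edges whose deletion separates U.
  Exchanging the order of summation turns M(c, ..., c) into a sum over the edges e of the weight
  of the k-tuples meeting both components A and B of T - e, which is
  c(V)^k - c(A)^k - c(B)^k.  For c(V) = 0 and even k this equals -2 c(A)^k, which is at most 0.
  If every term vanishes, then c(A) = 0 for all edges; the far components of the edges at a
  vertex v partition V - {v}, so c(V - {v}) = 0 and hence c(v) = 0.\<close>

abbreviation reach :: "nat set set \<Rightarrow> (nat \<times> nat) set" where
  "reach H \<equiv> (adj_rel H)\<^sup>*"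

lemma sym_adj_rel: "sym (adj_rel H)"
  by (auto simp: adj_rel_def insert_commute intro: symI)

lemma reach_sym: "(x, y) \<in> reach H \<Longrightarrow> (y, x) \<in> reach H"
  using sym_rtrancl[OF sym_adj_rel] by (auto dest: symD)

lemma reach_mono: "H \<subseteq> H' \<Longrightarrow> reach H \<subseteq> reach H'"
  by (rule rtrancl_mono) (auto simp: adj_rel_def)

lemma reach_edge: "{y, z} \<in> H \<Longrightarrow> (x, y) \<in> reach H \<Longrightarrow> (x, z) \<in> reach H"
  by (auto simp: adj_rel_def intro: rtrancl_into_rtrancl)

lemma reach_remove_edge:
  fixes a b :: nat
  assumes "(x, y) \<in> reach H"
  defines "H' \<equiv> H - {{a, b}}"
  shows "(x, y) \<in> reach H' \<or> (x, a) \<in> reach H' \<and> (b, y) \<in> reach H'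
           \<or> (x, b) \<in> reach H' \<and> (a, y) \<in> reach H'"
  using assms(1)
proof (induction rule: rtrancl_induct)
  case base
  then show ?case by simp
next
  case (step y z)
  then have yz: "{y, z} \<in> H" by (simp add: adj_rel_def)
  show ?case
  proof (cases "{y, z} = {a, b}")
    case True
    then have "y = a \<and> z = b \<or> y = b \<and> z = a" by (auto simp: doubleton_eq_iff)
    then show ?thesis using step.IH by auto
  next
    case False
    then have "{y, z} \<in> H'" using yz by (simp add: H'_def)
    then show ?thesis using step.IH reach_edge by blast
  qed
qed

definition separates :: "nat set set \<Rightarrow> nat set \<Rightarrow> nat set \<Rightarrow> bool" where
  "separates E e U \<longleftrightarrow> (\<exists>x\<in>U. \<exists>y\<in>U. (x, y) \<notin> reach (E - {e}))"

lemma separating_edge_in_connected_subgraph: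
  assumes "separates E e U" "E' \<subseteq> E" "U \<subseteq> V'" "graph_connected V' E'"
  shows "e \<in> E'"
proof (rule ccontr)
  assume "e \<notin> E'"
  then have "reach E' \<subseteq> reach (E - {e})"
    using assms(2) by (intro reach_mono) auto
  moreover obtain x y where "x \<in> U" "y \<in> U" "(x, y) \<notin> reach (E - {e})"
    using assms(1) by (auto simp: separates_def)
  ultimately show False
    using assms(3,4) unfolding graph_connected_def by blast
qed

lemma sum_prod_PiE_straddling:
  fixes c :: "'a \<Rightarrow> 'b::comm_ring_1"
  assumes "finite K" "K \<noteq> {}" "finite V" "A \<subseteq> V"
  shows "(\<Sum>i\<in>{i \<in> K \<rightarrow>\<^sub>E V. \<not> i ` K \<subseteq> A \<and> \<not> i ` K \<subseteq> V - A}. \<Prod>j\<in>K. c (i j))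
           = sum c V ^ card K - sum c A ^ card K - sum c (V - A) ^ card K"
proof -
  have sum_PiE: "(\<Sum>i\<in>K \<rightarrow>\<^sub>E X. \<Prod>j\<in>K. c (i j)) = sum c X ^ card K" if "finite X" for X
    using prod_sum_PiE[of K "\<lambda>_. X" "\<lambda>_. c"] assms(1) that by simp
  have PiE_within: "K \<rightarrow>\<^sub>E X = {i \<in> K \<rightarrow>\<^sub>E V. i ` K \<subseteq> X}" if "X \<subseteq> V" for X
    using that by (auto simp: PiE_iff extensional_def)
  have "{i \<in> K \<rightarrow>\<^sub>E V. \<not> i ` K \<subseteq> A \<and> \<not> i ` K \<subseteq> V - A}
          = (K \<rightarrow>\<^sub>E V) - ((K \<rightarrow>\<^sub>E A) \<union> (K \<rightarrow>\<^sub>E (V - A)))"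
    using PiE_within[of A] PiE_within[of "V - A"] assms(4) by blast
  moreover have "(K \<rightarrow>\<^sub>E A) \<inter> (K \<rightarrow>\<^sub>E (V - A)) = {}"
    using assms(2) by (auto simp: PiE_iff)
  moreover have "(K \<rightarrow>\<^sub>E A) \<union> (K \<rightarrow>\<^sub>E (V - A)) \<subseteq> K \<rightarrow>\<^sub>E V"
    using assms(4) by (auto simp: PiE_iff)
  moreover have "finite A"
    using assms(3,4) finite_subset by blast
  ultimately show ?thesis
    using assms(1,3)
    by (simp add: sum_diff finite_PiE sum.union_disjoint sum_PiE)
qed

locale tree =
  fixes n :: nat and E :: "nat set set"
  assumes is_tree: "is_tree n E"
begin

lemma edgeE:
  assumes "e \<in> E"
  obtains a b where "a \<noteq> b" "a \<in> {1..n}" "b \<in> {1..n}" "e = {a, b}"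
  using assms is_tree by (auto simp: is_tree_def simple_graph_on_def)

lemma edge_vertices: "{a, b} \<in> E \<Longrightarrow> a \<in> {1..n} \<and> b \<in> {1..n}"
  by (erule edgeE) (auto simp: doubleton_eq_iff)

lemma finite_edges: "finite E"
proof (rule finite_subset)
  show "E \<subseteq> Pow {1..n}"
    by (auto elim: edgeE)
qed simp

lemma reach_connected: "x \<in> {1..n} \<Longrightarrow> y \<in> {1..n} \<Longrightarrow> (x, y) \<in> reach E"
  using is_tree by (auto simp: is_tree_def graph_connected_def)

lemma edge_not_reach: "{a, b} \<in> E \<Longrightarrow> (a, b) \<notin> reach (E - {{a, b}})"
  using is_tree by (auto simp: is_tree_def acyclic_graph_def)

lemma reach_vertex: "(x, y) \<in> reach H \<Longrightarrow> H \<subseteq> E \<Longrightarrow> x \<in> {1..n} \<Longrightarrow> y \<in> {1..n}"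
proof (induction rule: rtrancl_induct)
  case (step y z)
  then have "{y, z} \<in> E"
    by (auto simp: adj_rel_def)
  then show ?case
    using edge_vertices by blast
qed simp

text \<open>If two vertices of U were joined only through a non-separating edge ab, then a and b
  would be joined in E - {ab}, closing a cycle.\<close>
lemma reach_without_nonseparating:
  assumes "finite G" "G \<subseteq> E" "\<forall>e\<in>G. \<not> separates E e U" "U \<subseteq> {1..n}"
  shows "\<forall>x\<in>U. \<forall>y\<in>U. (x, y) \<in> reach (E - G)"
  using assms(1-3)
proof (induction G rule: finite_induct)
  case empty
  then show ?case
    using reach_connected assms(4) by (simp add: subset_iff)
next
  case (insert e G)
  have "e \<in> E"
    using insert.prems(1) by simp
  then obtain a b where e: "e = {a, b}"
    by (rule edgeE)
  with \<open>e \<in> E\<close> have ab: "{a, b} \<in> E"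
    by simp
  define H where "H = E - G - {{a, b}}"
  have H_eq: "E - insert e G = H"
    using e by (auto simp: H_def)
  have no_crossing: False
    if "p \<in> U" "q \<in> U" "(p, a) \<in> reach H" "(b, q) \<in> reach H" for p q
  proof -
    have "reach H \<subseteq> reach (E - {e})"
      using e by (intro reach_mono) (auto simp: H_def)
    then have "(a, p) \<in> reach (E - {e})" "(q, b) \<in> reach (E - {e})"
      using that(3,4) reach_sym by blast+
    moreover have "(p, q) \<in> reach (E - {e})"
      using insert.prems(2) that(1,2) by (auto simp: separates_def)
    ultimately have "(a, b) \<in> reach (E - {{a, b}})"
      unfolding e by (meson rtrancl_trans)
    then show False
      using edge_not_reach ab by blast
  qed
  show ?case
  proof (intro ballI)
    fix x y
    assume xy: "x \<in> U" "y \<in> U"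
    then have "(x, y) \<in> reach (E - G)"
      using insert by auto
    then have "(x, y) \<in> reach H \<or> (x, a) \<in> reach H \<and> (b, y) \<in> reach H
                 \<or> (x, b) \<in> reach H \<and> (a, y) \<in> reach H"
      unfolding H_def by (rule reach_remove_edge)
    then show "(x, y) \<in> reach (E - insert e G)"
    proof (elim disjE conjE)
      assume "(x, b) \<in> reach H" "(a, y) \<in> reach H"
      then show ?thesis
        using no_crossing[OF xy(2,1)] reach_sym by blast
    qed (use H_eq no_crossing[OF xy] in auto)
  qed
qed

lemma connected_subgraph_of_separating:
  assumes "U \<subseteq> {1..n}" "U \<noteq> {}"
  obtains V' E' where "V' \<subseteq> {1..n}" "E' \<subseteq> {e \<in> E. separates E e U}" "\<forall>e\<in>E'. e \<subseteq> V'"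
    "U \<subseteq> V'" "graph_connected V' E'"
proof -
  define F where "F = {e \<in> E. separates E e U}"
  have "\<forall>x\<in>U. \<forall>y\<in>U. (x, y) \<in> reach (E - (E - F))"
    by (rule reach_without_nonseparating) (use finite_edges assms(1) in \<open>auto simp: F_def\<close>)
  moreover have "E - (E - F) = F"
    by (auto simp: F_def)
  ultimately have U_linked: "\<forall>x\<in>U. \<forall>y\<in>U. (x, y) \<in> reach F"
    by simp
  obtain u0 where u0: "u0 \<in> U"
    using assms(2) by auto
  define V' where "V' = {v. (u0, v) \<in> reach F}"
  define E' where "E' = {e \<in> F. e \<subseteq> V'}"
  have reach_E': "(u0, v) \<in> reach E'" if "(u0, v) \<in> reach F" for v
    using that
  proof (induction rule: rtrancl_induct)
    case (step y z)
    have "{y, z} \<in> F"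
      using step.hyps(2) by (simp add: adj_rel_def)
    moreover have "y \<in> V'" "z \<in> V'"
      using step.hyps(1) rtrancl_into_rtrancl[OF step.hyps] by (simp_all add: V'_def)
    ultimately have "{y, z} \<in> E'"
      by (simp add: E'_def)
    then show ?case
      using step.IH by (rule reach_edge)
  qed simp
  show thesis
  proof
    show "V' \<subseteq> {1..n}"
    proof
      fix v
      assume "v \<in> V'"
      then show "v \<in> {1..n}"
        using reach_vertex[of u0 v F] u0 assms(1) by (auto simp: V'_def F_def)
    qed
    show "E' \<subseteq> {e \<in> E. separates E e U}" "\<forall>e\<in>E'. e \<subseteq> V'"
      by (auto simp: E'_def F_def)
    show "U \<subseteq> V'"
      using U_linked u0 by (auto simp: V'_def)
    show "graph_connected V' E'"
      unfolding graph_connected_def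
    proof (intro ballI)
      fix x y
      assume "x \<in> V'" "y \<in> V'"
      then have "(x, u0) \<in> reach E'" "(u0, y) \<in> reach E'"
        using reach_E' reach_sym by (simp_all add: V'_def)
      then show "(x, y) \<in> reach E'"
        by (rule rtrancl_trans)
    qed
  qed
qed

lemma steiner_dist_eq_card_separating:
  assumes "U \<subseteq> {1..n}" "U \<noteq> {}"
  shows "steiner_dist n E U = card {e \<in> E. separates E e U}"
proof -
  define F where "F = {e \<in> E. separates E e U}"
  define Q where "Q m \<longleftrightarrow> (\<exists>V' E'. V' \<subseteq> {1..n} \<and> E' \<subseteq> E \<and> (\<forall>e\<in>E'. e \<subseteq> V') \<and> U \<subseteq> V'
                    \<and> graph_connected V' E' \<and> card E' = m)" for m
  have lower: "card F \<le> m" if "Q m" for m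
  proof -
    obtain V' E' where E': "E' \<subseteq> E" "U \<subseteq> V'" "graph_connected V' E'" "card E' = m"
      using \<open>Q m\<close> by (auto simp: Q_def)
    have "F \<subseteq> E'"
      using separating_edge_in_connected_subgraph[OF _ E'(1-3)] by (auto simp: F_def)
    moreover have "finite E'"
      using E'(1) finite_edges by (rule finite_subset)
    ultimately show ?thesis
      using E'(4) card_mono by blast
  qed
  obtain V' E' where E': "V' \<subseteq> {1..n}" "E' \<subseteq> F" "\<forall>e\<in>E'. e \<subseteq> V'" "U \<subseteq> V'"
    "graph_connected V' E'"
    using connected_subgraph_of_separating[OF assms] unfolding F_def .
  have "Q (card E')"
    unfolding Q_def using E' by (auto simp: F_def)
  moreover have "card E' \<le> card F"
    using E'(2) finite_edges by (intro card_mono) (auto simp: F_def)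
  ultimately have "Q (card F)"
    using lower by (metis le_antisym)
  then have "(LEAST m. Q m) = card F"
    using lower by (rule Least_equality)
  then show ?thesis
    by (simp add: steiner_dist_def Q_def F_def)
qed

definition side :: "nat \<Rightarrow> nat \<Rightarrow> nat set" where
  "side a b = {u \<in> {1..n}. (a, u) \<in> reach (E - {{a, b}})}"

lemma side_subset: "side a b \<subseteq> {1..n}"
  by (auto simp: side_def)

lemma endpoint_in_side: "{a, b} \<in> E \<Longrightarrow> a \<in> side a b"
  using edge_vertices by (simp add: side_def)

lemma reach_from_other_endpoint:
  assumes "{a, b} \<in> E" "u \<in> {1..n}" "u \<notin> side a b"
  shows "(b, u) \<in> reach (E - {{a, b}})"
proof -
  have "(a, u) \<in> reach E"
    using reach_connected edge_vertices assms(1,2) by blast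
  from reach_remove_edge[OF this, of a b] show ?thesis
    using assms(2,3) by (auto simp: side_def)
qed

lemma separates_iff_meets_both_sides:
  assumes "{a, b} \<in> E" "U \<subseteq> {1..n}"
  shows "separates E {a, b} U \<longleftrightarrow> \<not> U \<subseteq> side a b \<and> \<not> U \<subseteq> {1..n} - side a b"
proof
  assume "separates E {a, b} U"
  then obtain x y where xy: "x \<in> U" "y \<in> U" "(x, y) \<notin> reach (E - {{a, b}})"
    by (auto simp: separates_def)
  have not_both: False if "(p, x) \<in> reach (E - {{a, b}})" "(p, y) \<in> reach (E - {{a, b}})" for p
    using xy(3) rtrancl_trans[OF reach_sym[OF that(1)] that(2)] by blast
  show "\<not> U \<subseteq> side a b \<and> \<not> U \<subseteq> {1..n} - side a b"
  proof
    show "\<not> U \<subseteq> side a b"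
      using xy(1,2) not_both[of a] by (auto simp: side_def)
    show "\<not> U \<subseteq> {1..n} - side a b"
      using xy(1,2) not_both[of b] reach_from_other_endpoint[OF assms(1)] by blast
  qed
next
  assume "\<not> U \<subseteq> side a b \<and> \<not> U \<subseteq> {1..n} - side a b"
  then obtain x y where "x \<in> U" "x \<in> side a b" "y \<in> U" "y \<notin> side a b"
    using assms(2) by blast
  moreover have "(x, y) \<notin> reach (E - {{a, b}})"
  proof
    assume "(x, y) \<in> reach (E - {{a, b}})"
    with \<open>x \<in> side a b\<close> have "(a, y) \<in> reach (E - {{a, b}})"
      by (auto simp: side_def)
    with \<open>y \<in> U\<close> \<open>y \<notin> side a b\<close> show False
      using assms(2) by (auto simp: side_def)
  qed
  ultimately show "separates E {a, b} U"
    by (auto simp: separates_def)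
qed

definition separating_tuples :: "nat \<Rightarrow> nat set \<Rightarrow> (nat \<Rightarrow> nat) set" where
  "separating_tuples k e = {i \<in> {0..<k} \<rightarrow>\<^sub>E {1..n}. separates E e (i ` {0..<k})}"

lemma steiner_form_eq_sum_over_edges:
  assumes "k > 0"
  shows "steiner_form n E k x = (\<Sum>e\<in>E. \<Sum>i\<in>separating_tuples k e. \<Prod>j<k. x j (i j))"
proof -
  let ?P = "{0..<k} \<rightarrow>\<^sub>E {1..n}"
  let ?sep = "\<lambda>e i. separates E e (i ` {0..<k})"
  have "steiner_form n E k x = (\<Sum>i\<in>?P. real (card {e \<in> E. ?sep e i}) * (\<Prod>j<k. x j (i j)))"
    unfolding steiner_form_def
  proof (rule sum.cong[OF refl])
    fix i
    assume "i \<in> ?P"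
    then have "i ` {0..<k} \<subseteq> {1..n}" "i ` {0..<k} \<noteq> {}"
      using assms by (auto simp: PiE_iff)
    then show "real (steiner_dist n E (i ` {0..<k})) * (\<Prod>j<k. x j (i j))
                 = real (card {e \<in> E. ?sep e i}) * (\<Prod>j<k. x j (i j))"
      by (simp add: steiner_dist_eq_card_separating)
  qed
  also have "\<dots> = (\<Sum>i\<in>?P. \<Sum>e\<in>E. if ?sep e i then \<Prod>j<k. x j (i j) else 0)"
    by (simp add: sum.inter_filter[OF finite_edges, symmetric])
  also have "\<dots> = (\<Sum>e\<in>E. \<Sum>i\<in>?P. if ?sep e i then \<Prod>j<k. x j (i j) else 0)"
    by (rule sum.swap)
  also have "\<dots> = (\<Sum>e\<in>E. \<Sum>i\<in>separating_tuples k e. \<Prod>j<k. x j (i j))"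
    by (simp add: separating_tuples_def sum.inter_filter finite_PiE)
  finally show ?thesis .
qed

lemma sum_separating_tuples:
  fixes c :: "nat \<Rightarrow> 'a::comm_ring_1"
  assumes "{a, b} \<in> E" "k > 0"
  shows "(\<Sum>i\<in>separating_tuples k {a, b}. \<Prod>j<k. c (i j))
           = sum c {1..n} ^ k - sum c (side a b) ^ k - sum c ({1..n} - side a b) ^ k"
proof -
  let ?P = "{0..<k} \<rightarrow>\<^sub>E {1..n}"
  have "separating_tuples k {a, b}
          = {i \<in> ?P. \<not> i ` {0..<k} \<subseteq> side a b \<and> \<not> i ` {0..<k} \<subseteq> {1..n} - side a b}"
    unfolding separating_tuples_def
  proof (rule Collect_cong)
    fix i
    have "i \<in> ?P \<Longrightarrow> i ` {0..<k} \<subseteq> {1..n}"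
      by (auto simp: PiE_iff)
    then show "(i \<in> ?P \<and> separates E {a, b} (i ` {0..<k}))
                 \<longleftrightarrow> (i \<in> ?P \<and> \<not> i ` {0..<k} \<subseteq> side a b \<and> \<not> i ` {0..<k} \<subseteq> {1..n} - side a b)"
      using separates_iff_meets_both_sides[OF assms(1), of "i ` {0..<k}"] by blast
  qed
  then show ?thesis
    using sum_prod_PiE_straddling[of "{0..<k}" "{1..n}" "side a b" c] side_subset assms(2)
    by (simp add: atLeast0LessThan lessThan_empty_iff)
qed

lemma sum_separating_tuples_balanced:
  fixes c :: "nat \<Rightarrow> 'a::comm_ring_1"
  assumes "{a, b} \<in> E" "k > 0" "even k" "sum c {1..n} = 0"
  shows "(\<Sum>i\<in>separating_tuples k {a, b}. \<Prod>j<k. c (i j)) = - 2 * sum c (side a b) ^ k"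
proof -
  have "sum c ({1..n} - side a b) = sum c {1..n} - sum c (side a b)"
    by (rule sum_diff[OF finite_atLeastAtMost side_subset])
  then have "sum c ({1..n} - side a b) ^ k = sum c (side a b) ^ k"
    using assms(3,4) by simp
  then have "(\<Sum>i\<in>separating_tuples k {a, b}. \<Prod>j<k. c (i j))
               = 0 ^ k - sum c (side a b) ^ k - sum c (side a b) ^ k"
    using sum_separating_tuples[OF assms(1,2), of c] assms(4) by simp
  also have "\<dots> = - 2 * sum c (side a b) ^ k"
    using assms(2) by (simp add: power_0_left algebra_simps)
  finally show ?thesis .
qed

lemma far_side_exists:
  assumes "v \<in> {1..n}" "u \<in> {1..n}" "u \<noteq> v"
  shows "\<exists>w. {v, w} \<in> E \<and> u \<notin> side v w"
proof -
  have "u = v \<or> (\<exists>w. {v, w} \<in> E \<and> (v, u) \<notin> reach (E - {{v, w}}))"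
    using reach_connected[OF assms(1,2)]
  proof (induction rule: rtrancl_induct)
    case (step y z)
    then have yz: "{y, z} \<in> E"
      by (simp add: adj_rel_def)
    show ?case
    proof (cases "z = v")
      case False
      from step.IH show ?thesis
      proof
        assume "y = v"
        with yz have "{v, z} \<in> E"
          by simp
        moreover from this have "(v, z) \<notin> reach (E - {{v, z}})"
          by (rule edge_not_reach)
        ultimately show ?thesis
          by blast
      next
        assume "\<exists>w. {v, w} \<in> E \<and> (v, y) \<notin> reach (E - {{v, w}})"
        then obtain w where w: "{v, w} \<in> E" "(v, y) \<notin> reach (E - {{v, w}})"
          by blast
        have "{y, z} \<noteq> {v, w}"
          using False w(2) by (auto simp: doubleton_eq_iff)
        with yz have "{z, y} \<in> E - {{v, w}}"
          by (simp add: insert_commute)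
        have "(v, z) \<notin> reach (E - {{v, w}})"
        proof
          assume "(v, z) \<in> reach (E - {{v, w}})"
          with \<open>{z, y} \<in> E - {{v, w}}\<close> have "(v, y) \<in> reach (E - {{v, w}})"
            by (rule reach_edge)
          with w(2) show False
            by contradiction
        qed
        with w(1) show ?thesis
          by blast
      qed
    qed simp
  qed simp
  with assms(3) obtain w where "{v, w} \<in> E" "(v, u) \<notin> reach (E - {{v, w}})"
    by blast
  then show ?thesis
    by (auto simp: side_def)
qed

lemma far_sides_disjoint:
  assumes "{v, w1} \<in> E" "{v, w2} \<in> E" "w1 \<noteq> w2"
  shows "({1..n} - side v w1) \<inter> ({1..n} - side v w2) = {}"
proof -
  have False if u: "u \<in> {1..n}" "u \<notin> side v w1" "u \<notin> side v w2" for u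
  proof -
    define H where "H = E - {{v, w1}} - {{v, w2}}"
    have H1: "reach H \<subseteq> reach (E - {{v, w1}})"
      by (rule reach_mono) (auto simp: H_def)
    have H2: "reach H \<subseteq> reach (E - {{v, w2}})"
      by (rule reach_mono) (auto simp: H_def)
    have "(w1, u) \<in> reach (E - {{v, w1}})"
      using reach_from_other_endpoint[OF assms(1) u(1,2)] .
    from reach_remove_edge[OF this, of v w2, folded H_def]
    consider "(w1, u) \<in> reach H" | "(w1, v) \<in> reach H" | "(v, u) \<in> reach H"
      by blast
    then show False
    proof cases
      case 1
      have "{v, w1} \<in> E - {{v, w2}}"
        using assms by (auto simp: doubleton_eq_iff)
      then have "(v, w1) \<in> reach (E - {{v, w2}})"
        by (rule reach_edge) simp
      moreover have "(w1, u) \<in> reach (E - {{v, w2}})"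
        using 1 H2 by blast
      ultimately have "(v, u) \<in> reach (E - {{v, w2}})"
        by (rule rtrancl_trans)
      then show False
        using u(1,3) by (simp add: side_def)
    next
      case 2
      then have "(v, w1) \<in> reach (E - {{v, w1}})"
        using H1 reach_sym by blast
      then show False
        using edge_not_reach[OF assms(1)] by contradiction
    next
      case 3
      then have "(v, u) \<in> reach (E - {{v, w1}})"
        using H1 by blast
      then show False
        using u(1,2) by (simp add: side_def)
    qed
  qed
  then show ?thesis
    by blast
qed

text \<open>The far sides of the edges at v partition the vertices other than v.\<close>
lemma vanishing_side_sums_imp_zero:
  fixes c :: "nat \<Rightarrow> 'a::ab_group_add"
  assumes "sum c {1..n} = 0" "\<And>a b. {a, b} \<in> E \<Longrightarrow> sum c (side a b) = 0" "v \<in> {1..n}"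
  shows "c v = 0"
proof -
  define N where "N = {w. {v, w} \<in> E}"
  define far where "far w = {1..n} - side v w" for w
  have "N \<subseteq> {1..n}"
    using edge_vertices by (auto simp: N_def)
  then have "finite N"
    by (rule finite_subset) simp
  have partition: "{1..n} - {v} = (\<Union>w\<in>N. far w)"
  proof
    show "{1..n} - {v} \<subseteq> (\<Union>w\<in>N. far w)"
    proof
      fix u
      assume u: "u \<in> {1..n} - {v}"
      then obtain w where "{v, w} \<in> E" "u \<notin> side v w"
        using far_side_exists[OF assms(3)] by blast
      with u show "u \<in> (\<Union>w\<in>N. far w)"
        by (auto simp: N_def far_def)
    qed
    show "(\<Union>w\<in>N. far w) \<subseteq> {1..n} - {v}"
      using endpoint_in_side by (auto simp: N_def far_def)
  qed
  have "\<forall>w1\<in>N. \<forall>w2\<in>N. w1 \<noteq> w2 \<longrightarrow> far w1 \<inter> far w2 = {}"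
    using far_sides_disjoint by (simp add: N_def far_def)
  then have "sum c ({1..n} - {v}) = (\<Sum>w\<in>N. sum c (far w))"
    unfolding partition using \<open>finite N\<close> by (intro sum.UNION_disjoint) (simp_all add: far_def)
  also have "\<dots> = 0"
  proof (rule sum.neutral, rule ballI)
    fix w
    assume "w \<in> N"
    have "sum c (far w) = sum c {1..n} - sum c (side v w)"
      unfolding far_def by (rule sum_diff[OF finite_atLeastAtMost side_subset])
    then show "sum c (far w) = 0"
      using assms(1,2) \<open>w \<in> N\<close> by (simp add: N_def)
  qed
  finally show ?thesis
    using assms(1,3) by (simp add: sum_diff1)
qed

end

theorem mainTheorem4:
  fixes n k :: nat and E :: "nat set set" and c :: "nat \<Rightarrow> real"
  assumes "is_tree n E" and "n \<ge> 3" and "k \<ge> 2" and "even k"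
    and "\<exists>i\<in>{1..n}. c i \<noteq> 0"
    and "(\<Sum>i=1..n. c i) = 0"
  shows "steiner_form n E k (\<lambda>_. c) < 0"
proof -
  interpret tree n E
    by (rule tree.intro) fact
  have "k > 0"
    using \<open>k \<ge> 2\<close> by simp
  define t where "t e = (\<Sum>i\<in>separating_tuples k e. \<Prod>j<k. c (i j))" for e
  have t_edge: "t {a, b} = - 2 * sum c (side a b) ^ k" if "{a, b} \<in> E" for a b
    unfolding t_def by (rule sum_separating_tuples_balanced[OF that \<open>k > 0\<close> \<open>even k\<close> assms(6)])
  have "\<forall>e\<in>E. t e \<le> 0"
  proof
    fix e
    assume "e \<in> E"
    then obtain a b where "e = {a, b}"
      by (rule edgeE)
    with \<open>e \<in> E\<close> show "t e \<le> 0"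
      using t_edge \<open>even k\<close> by (simp add: zero_le_even_power)
  qed
  moreover have "\<exists>e\<in>E. t e < 0"
  proof -
    obtain v where "v \<in> {1..n}" "c v \<noteq> 0"
      using assms(5) by blast
    then obtain a b where ab: "{a, b} \<in> E" "sum c (side a b) \<noteq> 0"
      using vanishing_side_sums_imp_zero[OF assms(6)] by blast
    then have "t {a, b} < 0"
      using t_edge \<open>even k\<close> \<open>k > 0\<close> by (simp add: zero_less_power_eq)
    with ab(1) show ?thesis
      by blast
  qed
  ultimately have "sum t E < 0"
    using sum_strict_mono_ex1[of E t "\<lambda>_. 0"] finite_edges by simp
  then show ?thesis
    using steiner_form_eq_sum_over_edges[OF \<open>k > 0\<close>, of "\<lambda>_. c"] by (simp add: t_def)
qed

end
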